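(* For $z=x+iy$ with $x>1$ and $y\in\mathbb{R}$, \[|\zeta(z)|^2=\zeta(2x)\sum_{m=1}^{\infty}\frac{2^{\omega(m)}}{m^{x}}\prod_{p\mid m}\cos\big(y\ln p^{v_p(m)}\big).\]
   Context: $\zeta(s)=\sum_{n\ge1}n^{-s}$ for $\Re(s)>1$; $\omega(m)$ is the number of distinct prime divisors of $m$; $v_p(m)$ is the exponent of the prime $p$ in $m$; the product is over the primes dividing $m$ (empty product $=1$). *)

theory Defs
  imports "HOL-Analysis.Analysis" "HOL-Computational_Algebra.Primes"
begin

text \<open>Riemann zeta function via its Dirichlet series (meaningful for Re s > 1).\<close>
definition zeta :: "complex \<Rightarrow> complex" where
  "zeta s = (\<Sum>n. inverse (of_nat (Suc n) powr s))"

definition omega :: "nat \<Rightarrow> nat" where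
  "omega m = card (prime_factors m)"

end

theory Submission
  imports Defs
begin

text \<open>
  The Dirichlet coefficients of \<open>\<zeta>\<close> are real, so \<open>|\<zeta>(s)|\<^sup>2 = \<zeta>(cnj s) \<zeta>(s)\<close>. Expanding this product of
  two absolutely convergent Dirichlet series and writing every pair \<open>(d, e)\<close> uniquely as
  \<open>(k u, k w)\<close> with \<open>k = gcd d e\<close> and \<open>u, w\<close> coprime gives
  \<open>\<zeta>(cnj s) \<zeta>(s) = \<zeta>(2 x) \<Sum> u powr -cnj s * w powr -s\<close>, summed over coprime pairs.
  A coprime pair is the same thing as a number \<open>m = u w\<close> together with the set of primes dividing \<open>u\<close>,
  so the terms with \<open>u w = m\<close> add up to a product over the prime powers \<open>q\<close> exactly dividing \<open>m\<close>:
  \<open>\<Prod> (q powr -cnj s + q powr -s) = m powr -x * \<Prod> 2 cos (y ln q)\<close>.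
\<close>

definition prime_power_part :: "nat \<Rightarrow> nat set \<Rightarrow> nat" where
  "prime_power_part m S = (\<Prod>p\<in>S. p ^ multiplicity p m)"

definition coprime_pairs :: "(nat \<times> nat) set" where
  "coprime_pairs = {(u, w). 0 < u \<and> 0 < w \<and> coprime u w}"

lemma prime_power_part_pos:
  assumes "S \<subseteq> prime_factors m"
  shows "prime_power_part m S > 0"
  using assms unfolding prime_power_part_def
  by (intro prod_pos) (auto dest: in_prime_factors_imp_prime prime_gt_0_nat)

lemma prime_power_part_mult_complement:
  assumes "m > 0" "S \<subseteq> prime_factors m"
  shows "prime_power_part m S * prime_power_part m (prime_factors m - S) = m"
proof -
  have "prime_power_part m S * prime_power_part m (prime_factors m - S)
      = (\<Prod>p\<in>prime_factors m. p ^ multiplicity p m)"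
    unfolding prime_power_part_def using assms(2) by (subst prod.subset_diff[of S]) auto
  also have "\<dots> = m" using prime_factorization_nat[OF assms(1)] by simp
  finally show ?thesis .
qed

lemma prime_factors_prime_power_part:
  assumes "S \<subseteq> prime_factors m"
  shows "prime_factors (prime_power_part m S) = S"
proof -
  have "multiplicity p (prime_power_part m S) = (if p \<in> S then multiplicity p m else 0)"
    if "prime p" for p
    unfolding prime_power_part_def using assms that
    by (intro multiplicity_prod_prime_powers) (auto intro: finite_subset dest: in_prime_factors_imp_prime)
  then show ?thesis
    using assms by (auto simp: prime_factors_multiplicity split: if_splits)
qed

lemma coprime_prime_power_part_complement:
  assumes "S \<subseteq> prime_factors m"
  shows "coprime (prime_power_part m S) (prime_power_part m (prime_factors m - S))"
  unfolding prime_power_part_def using assms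
  by (intro prod_coprime_left prod_coprime_right)
     (auto intro!: primes_coprime dest: in_prime_factors_imp_prime)

lemma prime_power_part_coprime_mult:
  assumes "u > 0" "w > 0" "coprime u w"
  shows "prime_power_part (u * w) (prime_factors u) = u"
proof -
  have "p ^ multiplicity p (u * w) = p ^ multiplicity p u" if "p \<in> prime_factors u" for p
  proof -
    have "prime p" "p dvd u" using that by auto
    then have "\<not> p dvd w"
      using assms(3) by (meson coprime_common_divisor not_prime_unit)
    then show ?thesis
      using \<open>prime p\<close> assms
      by (simp add: prime_elem_multiplicity_mult_distrib not_dvd_imp_multiplicity_0)
  qed
  then have "prime_power_part (u * w) (prime_factors u) = (\<Prod>p\<in>prime_factors u. p ^ multiplicity p u)"
    unfolding prime_power_part_def by (rule prod.cong[OF refl])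
  also have "\<dots> = u" using prime_factorization_nat[OF assms(1)] by simp
  finally show ?thesis .
qed

lemma prime_factors_mult_coprime:
  fixes u w :: nat
  assumes "u > 0" "w > 0" "coprime u w"
  shows "prime_factors (u * w) = prime_factors u \<union> prime_factors w"
    and "prime_factors u \<inter> prime_factors w = {}"
  using assms by (auto simp: prime_factors_product dest: coprime_common_divisor not_prime_unit)

lemma bij_betw_prime_power_parts:
  "bij_betw (\<lambda>(m, S). (prime_power_part m S, prime_power_part m (prime_factors m - S)))
     (SIGMA m:{0<..}. Pow (prime_factors m)) coprime_pairs"
proof (rule bij_betwI[where g = "\<lambda>(u, w). (u * w, prime_factors u)"])
  show "(\<lambda>(m, S). (prime_power_part m S, prime_power_part m (prime_factors m - S)))
      \<in> (SIGMA m:{0<..}. Pow (prime_factors m)) \<rightarrow> coprime_pairs"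
    by (auto simp: coprime_pairs_def intro!: prime_power_part_pos coprime_prime_power_part_complement)
  show "(\<lambda>(u, w). (u * w, prime_factors u)) \<in> coprime_pairs \<rightarrow> (SIGMA m:{0<..}. Pow (prime_factors m))"
    by (auto simp: coprime_pairs_def prime_factors_mult_coprime)
  show "(\<lambda>(u, w). (u * w, prime_factors u))
      ((\<lambda>(m, S). (prime_power_part m S, prime_power_part m (prime_factors m - S))) p) = p"
    if "p \<in> (SIGMA m:{0<..}. Pow (prime_factors m))" for p
    using that by (auto simp: prime_power_part_mult_complement prime_factors_prime_power_part)
  show "(\<lambda>(m, S). (prime_power_part m S, prime_power_part m (prime_factors m - S)))
      ((\<lambda>(u, w). (u * w, prime_factors u)) c) = c"
    if "c \<in> coprime_pairs" for c
  proof -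
    obtain u w where c: "c = (u, w)" "u > 0" "w > 0" "coprime u w"
      using \<open>c \<in> coprime_pairs\<close> unfolding coprime_pairs_def by blast
    then have "prime_factors (u * w) - prime_factors u = prime_factors w"
      using prime_factors_mult_coprime[of u w] by blast
    then show ?thesis
      using c prime_power_part_coprime_mult[of u w] prime_power_part_coprime_mult[of w u]
      by (simp add: mult.commute coprime_commute)
  qed
qed

lemma bij_betw_gcd_factorization:
  "bij_betw (\<lambda>(k, u, w). (k * u, k * w)) ({0<..} \<times> coprime_pairs) ({0<..} \<times> {0<..})"
proof (rule bij_betwI[where g = "\<lambda>(d, e). (gcd d e, d div gcd d e, e div gcd d e)"])
  show "(\<lambda>(k, u, w). (k * u, k * w)) \<in> {0<..} \<times> coprime_pairs \<rightarrow> {0<..} \<times> {0<..}"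
    by (auto simp: coprime_pairs_def)
  show "(\<lambda>(d, e). (gcd d e, d div gcd d e, e div gcd d e)) \<in> {0<..} \<times> {0<..} \<rightarrow> {0<..} \<times> coprime_pairs"
    by (auto simp: coprime_pairs_def div_greater_zero_iff intro: div_gcd_coprime)
qed (auto simp: coprime_pairs_def gcd_mult_distrib_nat[symmetric])

lemma norm_summable_on_Times_mult:
  fixes f g :: "_ \<Rightarrow> 'c::{real_normed_div_algebra, banach}"
  assumes f: "(\<lambda>x. norm (f x)) summable_on A" and g: "(\<lambda>y. norm (g y)) summable_on B"
  shows "(\<lambda>(x, y). norm (f x * g y)) summable_on A \<times> B"
proof -
  have "(\<lambda>p. norm ((\<lambda>(x, y). f x * g y) p)) summable_on A \<times> B"
  proof (rule Infinite_Sum.abs_summable_on_Sigma_iff[THEN iffD2], intro conjI ballI)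
    show "(\<lambda>y. norm ((\<lambda>(x, y). f x * g y) (x, y))) summable_on B" for x
      using summable_on_cmult_right[OF g, of "norm (f x)"] by (simp add: norm_mult)
    have "(\<lambda>x. norm (f x) * infsum (\<lambda>y. norm (g y)) B) summable_on A"
      by (rule summable_on_cmult_left[OF f])
    then show "(\<lambda>x. norm (\<Sum>\<^sub>\<infinity>y\<in>B. norm ((\<lambda>(x, y). f x * g y) (x, y)))) summable_on A"
      by (simp add: norm_mult infsum_cmult_right g infsum_nonneg)
  qed
  then show ?thesis
    by (simp add: case_prod_unfold)
qed

lemma has_sum_Times_mult:
  fixes f g :: "_ \<Rightarrow> 'c::{real_normed_div_algebra, banach}"
  assumes "(f has_sum a) A" "(g has_sum b) B"
    and "(\<lambda>x. norm (f x)) summable_on A" "(\<lambda>y. norm (g y)) summable_on B"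
  shows "((\<lambda>(x, y). f x * g y) has_sum a * b) (A \<times> B)"
proof (rule has_sum_SigmaI[where g = "\<lambda>x. f x * b"])
  show "((\<lambda>y. (\<lambda>(x, y). f x * g y) (x, y)) has_sum f x * b) B" for x
    using has_sum_cmult_right[OF assms(2), of "f x"] by simp
  show "((\<lambda>x. f x * b) has_sum a * b) A"
    by (rule has_sum_cmult_left[OF assms(1)])
  have "(\<lambda>p. norm ((\<lambda>(x, y). f x * g y) p)) summable_on A \<times> B"
    using norm_summable_on_Times_mult[OF assms(3,4)] by (simp add: case_prod_unfold)
  then show "(\<lambda>(x, y). f x * g y) summable_on A \<times> B"
    by (rule abs_summable_summable)
qed

lemma of_nat_mult_powr: "(of_nat (m * n) :: complex) powr z = of_nat m powr z * of_nat n powr z"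
  by (simp add: powr_times_real)

lemma of_nat_prod_powr: "(of_nat (\<Prod>i\<in>I. f i) :: complex) powr z = (\<Prod>i\<in>I. of_nat (f i) powr z)"
  by (induction I rule: infinite_finite_induct) (simp_all add: of_nat_mult_powr del: of_nat_prod of_nat_mult)

lemma norm_of_nat_powr: "norm ((of_nat n :: complex) powr s) = real n powr Re s"
  by (simp add: norm_powr_real_powr)

lemma norm_summable_on_of_nat_powr:
  assumes "Re s > 1"
  shows "(\<lambda>n::nat. norm ((of_nat n :: complex) powr -s)) summable_on A"
proof -
  have "summable (\<lambda>n::nat. norm (norm ((of_nat n :: complex) powr -s)))"
    using assms by (simp add: norm_of_nat_powr summable_real_powr_iff)
  then have "(\<lambda>n::nat. norm ((of_nat n :: complex) powr -s)) summable_on UNIV"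
    by (rule norm_summable_imp_summable_on)
  then show ?thesis
    by (rule summable_on_subset_banach) simp
qed

lemma has_sum_Suc_iff_greaterThan_0:
  "((\<lambda>n. f (Suc n)) has_sum S) UNIV \<longleftrightarrow> (f has_sum S) {0<..}"
proof -
  have "bij_betw Suc UNIV {0<..}"
    by (rule bij_betwI[where g = "\<lambda>n. n - 1"]) auto
  then show ?thesis
    by (rule has_sum_reindex_bij_betw)
qed

lemma zeta_has_sum:
  assumes "Re s > 1"
  shows "((\<lambda>n. of_nat n powr -s) has_sum zeta s) {0<..}"
proof -
  have "summable (\<lambda>n. real (Suc n) powr -Re s)"
    using assms summable_Suc_iff[where f = "\<lambda>n. real n powr -Re s"]
    by (simp add: summable_real_powr_iff)
  then have "summable (\<lambda>n. norm ((of_nat (Suc n) :: complex) powr -s))"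
    by (simp only: norm_of_nat_powr uminus_complex.sel)
  moreover from this have "(\<lambda>n. of_nat (Suc n) powr -s) sums zeta s"
    unfolding zeta_def by (simp add: powr_minus summable_norm_cancel summable_sums)
  ultimately have "((\<lambda>n. of_nat (Suc n) powr -s) has_sum zeta s) UNIV"
    by (rule norm_summable_imp_has_sum)
  then show ?thesis
    using has_sum_Suc_iff_greaterThan_0[of "\<lambda>n. of_nat n powr -s"] by simp
qed

lemma zeta_cnj:
  assumes "Re s > 1"
  shows "zeta (cnj s) = cnj (zeta s)"
proof -
  have "((\<lambda>n. cnj (of_nat n powr -s)) has_sum cnj (zeta s)) {0<..}"
    using zeta_has_sum[OF assms] by simp
  then have "((\<lambda>n. of_nat n powr -cnj s) has_sum cnj (zeta s)) {0<..}"
    by (simp add: cnj_powr)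
  with zeta_has_sum[of "cnj s"] assms show ?thesis
    using has_sum_unique by fastforce
qed

lemma zeta_mult_zeta_coprime_pairs:
  fixes a b :: complex
  assumes "Re a > 1" "Re b > 1"
  defines "F \<equiv> \<lambda>(u, w). of_nat u powr -a * of_nat w powr -b"
  shows "F summable_on coprime_pairs"
    and "zeta a * zeta b = zeta (a + b) * (\<Sum>\<^sub>\<infinity>c\<in>coprime_pairs. F c)"
proof -
  let ?P = "{0::nat<..}"
  have F_sum: "(F has_sum zeta a * zeta b) (?P \<times> ?P)"
    unfolding F_def using assms
    by (intro has_sum_Times_mult zeta_has_sum norm_summable_on_of_nat_powr) auto
  have "(\<lambda>c. norm (F c)) summable_on ?P \<times> ?P"
    using norm_summable_on_Times_mult[OF norm_summable_on_of_nat_powr norm_summable_on_of_nat_powr] assms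
    by (simp add: F_def case_prod_unfold)
  then have F_norm: "(\<lambda>c. norm (F c)) summable_on coprime_pairs"
    by (rule summable_on_subset_banach) (auto simp: coprime_pairs_def)
  then show F_summable: "F summable_on coprime_pairs"
    by (rule abs_summable_summable)
  have "F (k * u, k * w) = of_nat k powr -(a + b) * F (u, w)" for k u w
  proof -
    have "of_nat k powr -(a + b) = of_nat k powr -a * (of_nat k powr -b :: complex)"
      by (metis minus_add_distrib powr_add)
    then show ?thesis
      by (simp add: F_def of_nat_mult_powr mult_ac del: of_nat_mult)
  qed
  then have "((\<lambda>(k, c). of_nat k powr -(a + b) * F c) has_sum zeta a * zeta b) (?P \<times> coprime_pairs)"
    using has_sum_reindex_bij_betw[OF bij_betw_gcd_factorization, of F] F_sum
    by (simp add: case_prod_unfold)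
  moreover have "((\<lambda>(k, c). of_nat k powr -(a + b) * F c)
      has_sum zeta (a + b) * (\<Sum>\<^sub>\<infinity>c\<in>coprime_pairs. F c)) (?P \<times> coprime_pairs)"
    using assms F_summable F_norm
    by (intro has_sum_Times_mult zeta_has_sum norm_summable_on_of_nat_powr) auto
  ultimately show "zeta a * zeta b = zeta (a + b) * (\<Sum>\<^sub>\<infinity>c\<in>coprime_pairs. F c)"
    by (rule has_sum_unique)
qed

lemma sum_Pow_prime_power_parts_powr:
  fixes a b :: complex
  shows "(\<Sum>S\<in>Pow (prime_factors m). of_nat (prime_power_part m S) powr -a
           * of_nat (prime_power_part m (prime_factors m - S)) powr -b)
       = (\<Prod>p\<in>prime_factors m. of_nat (p ^ multiplicity p m) powr -a
           + of_nat (p ^ multiplicity p m) powr -b)"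
  unfolding prime_power_part_def of_nat_prod_powr by (subst prod_add) auto

lemma coprime_pairs_has_sum_prime_factors:
  fixes a b :: complex
  defines "F \<equiv> \<lambda>(u, w). of_nat u powr -a * of_nat w powr -b"
  assumes "F summable_on coprime_pairs"
  shows "((\<lambda>m. \<Prod>p\<in>prime_factors m. of_nat (p ^ multiplicity p m) powr -a
            + of_nat (p ^ multiplicity p m) powr -b)
          has_sum (\<Sum>\<^sub>\<infinity>c\<in>coprime_pairs. F c)) {0<..}"
proof (rule has_sum_Sigma')
  show "((\<lambda>(m, S). F (prime_power_part m S, prime_power_part m (prime_factors m - S)))
      has_sum (\<Sum>\<^sub>\<infinity>c\<in>coprime_pairs. F c)) (SIGMA m:{0<..}. Pow (prime_factors m))"
    using has_sum_reindex_bij_betw[OF bij_betw_prime_power_parts, of F] assms(2)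
    by (simp add: case_prod_unfold has_sum_infsum)
  show "((\<lambda>S. (\<lambda>(m, S). F (prime_power_part m S, prime_power_part m (prime_factors m - S))) (m, S))
      has_sum (\<Prod>p\<in>prime_factors m. of_nat (p ^ multiplicity p m) powr -a
                 + of_nat (p ^ multiplicity p m) powr -b)) (Pow (prime_factors m))" for m
    unfolding sum_Pow_prime_power_parts_powr[symmetric] by (simp add: F_def has_sum_finite)
qed

lemma of_nat_powr_cnj_add:
  assumes "q > 0"
  shows "of_nat q powr -cnj s + of_nat q powr -s
       = complex_of_real (2 * (real q powr -Re s * cos (Im s * ln (real q))))"
proof -
  have "of_nat q powr -cnj s = cnj (of_nat q powr -s)"
    by (simp add: cnj_powr)
  moreover have "Re (of_nat q powr -s) = real q powr -Re s * cos (Im s * ln (real q))"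
    using assms by (simp add: powr_def Re_exp)
  ultimately show ?thesis
    by (simp add: complex_add_cnj add.commute)
qed

lemma prod_prime_factors_powr_cnj_add:
  assumes "m > 0"
  shows "(\<Prod>p\<in>prime_factors m. of_nat (p ^ multiplicity p m) powr -cnj s
            + of_nat (p ^ multiplicity p m) powr -s)
       = complex_of_real (2 ^ omega m / real m powr Re s *
           (\<Prod>p\<in>prime_factors m. cos (Im s * ln (real (p ^ multiplicity p m)))))"
proof -
  let ?q = "\<lambda>p. p ^ multiplicity p m"
  have "(\<Prod>p\<in>prime_factors m. real (?q p) powr -Re s) = real (\<Prod>p\<in>prime_factors m. ?q p) powr -Re s"
    by (simp add: prod_powr_distrib del: of_nat_power)
  also have "\<dots> = 1 / real m powr Re s"
    using prime_factorization_nat[OF assms] by (simp add: powr_minus_divide)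
  finally have prod_powr: "(\<Prod>p\<in>prime_factors m. real (?q p) powr -Re s) = 1 / real m powr Re s" .
  have "(\<Prod>p\<in>prime_factors m. of_nat (?q p) powr -cnj s + of_nat (?q p) powr -s)
      = (\<Prod>p\<in>prime_factors m. complex_of_real (2 * (real (?q p) powr -Re s * cos (Im s * ln (real (?q p))))))"
    by (intro prod.cong refl of_nat_powr_cnj_add) (auto intro: prime_gt_0_nat)
  also have "\<dots> = complex_of_real (2 ^ card (prime_factors m) * (\<Prod>p\<in>prime_factors m. real (?q p) powr -Re s)
      * (\<Prod>p\<in>prime_factors m. cos (Im s * ln (real (?q p)))))"
    by (simp add: prod.distrib del: of_nat_power)
  finally show ?thesis
    by (simp add: prod_powr omega_def del: of_nat_power)
qed

theorem mainTheorem4: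
  fixes x y :: real
  assumes "x > 1"
  defines "a \<equiv> (\<lambda>m::nat. (2::real) ^ omega m / real m powr x *
      (\<Prod>p\<in>prime_factors m. cos (y * ln (real (p ^ multiplicity p m)))))"
  shows "summable (\<lambda>m. a (Suc m)) \<and>
         complex_of_real ((cmod (zeta (Complex x y)))\<^sup>2)
           = zeta (complex_of_real (2 * x)) * complex_of_real (\<Sum>m. a (Suc m))"
proof -
  define s where "s = Complex x y"
  define F where "F = (\<lambda>(u, w). of_nat u powr -cnj s * of_nat w powr -s :: complex)"
  define \<sigma> where "\<sigma> = (\<Sum>\<^sub>\<infinity>c\<in>coprime_pairs. F c)"
  have s: "Re (cnj s) > 1" "Re s > 1" "cnj s + s = complex_of_real (2 * x)"
    using assms by (simp_all add: s_def complex_eq_iff)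
  have Re_s: "Re s = x" "Im s = y"
    by (simp_all add: s_def)
  have "((\<lambda>m. \<Prod>p\<in>prime_factors m. of_nat (p ^ multiplicity p m) powr -cnj s
      + of_nat (p ^ multiplicity p m) powr -s) has_sum \<sigma>) {0<..}"
    using coprime_pairs_has_sum_prime_factors zeta_mult_zeta_coprime_pairs(1)[OF s(1,2)]
    unfolding F_def \<sigma>_def .
  moreover have "(\<Prod>p\<in>prime_factors m. of_nat (p ^ multiplicity p m) powr -cnj s
      + of_nat (p ^ multiplicity p m) powr -s) = complex_of_real (a m)" if "m \<in> {0<..}" for m
    using prod_prime_factors_powr_cnj_add[of m s] that unfolding a_def Re_s by simp
  ultimately have "((\<lambda>m. complex_of_real (a m)) has_sum \<sigma>) {0<..}"
    by (metis (no_types, lifting) has_sum_cong)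
  then have "((\<lambda>m. complex_of_real (a (Suc m))) has_sum \<sigma>) UNIV"
    by (rule has_sum_Suc_iff_greaterThan_0[THEN iffD2])
  moreover from this have "((\<lambda>m. a (Suc m)) has_sum Re \<sigma>) UNIV"
    using has_sum_Re by fastforce
  ultimately have a_sums: "(\<lambda>m. a (Suc m)) sums Re \<sigma>" and "\<sigma> = complex_of_real (Re \<sigma>)"
    using has_sum_unique has_sum_of_real has_sum_imp_sums by blast+
  have "complex_of_real ((cmod (zeta s))\<^sup>2) = zeta (cnj s) * zeta s"
    by (subst complex_norm_square) (simp add: zeta_cnj[OF s(2)] mult.commute)
  also have "\<dots> = zeta (complex_of_real (2 * x)) * \<sigma>"
    using zeta_mult_zeta_coprime_pairs(2)[OF s(1,2)] by (simp add: s(3) F_def \<sigma>_def)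
  finally show ?thesis
    using a_sums \<open>\<sigma> = complex_of_real (Re \<sigma>)\<close> by (simp add: s_def sums_iff)
qed

end
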